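(* For every integer $k\ge2$, $$\max_{n\ge1}\frac{\log{\mathfrak t}_k(n)}{n}=\frac12\log\binom{k+1}{2}.$$
   Context: For a positive integer $n$, ${\mathfrak t}_k(n)$ is the number of ordered $k$-tuples $({\mathfrak d}_1,\dots,{\mathfrak d}_k)$ of nonzero Gaussian integers, each taken up to associates (multiplication by $\pm1,\pm i$), such that ${\mathfrak d}_1\cdots{\mathfrak d}_k$ is associated to $n$; equivalently, the number of ordered $k$-tuples of ideals of $\mathbb{Z}[i]$ whose product is $n\mathbb{Z}[i]$. *)

theory Defs
  imports Complex_Main
begin

definition gauss_int :: "complex \<Rightarrow> bool" where
  "gauss_int z \<longleftrightarrow> Re z \<in> \<int> \<and> Im z \<in> \<int>"

definition gassoc :: "complex \<Rightarrow> complex \<Rightarrow> bool" where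
  "gassoc a b \<longleftrightarrow> (\<exists>u \<in> {1, -1, \<i>, -\<i>}. b = u * a)"

definition gtuples :: "nat \<Rightarrow> nat \<Rightarrow> complex list set" where
  "gtuples k n = {ds. length ds = k \<and> (\<forall>d \<in> set ds. gauss_int d \<and> d \<noteq> 0)
                      \<and> gassoc (prod_list ds) (of_nat n)}"

definition gtuple_rel :: "nat \<Rightarrow> nat \<Rightarrow> (complex list \<times> complex list) set" where
  "gtuple_rel k n = {(ds, es). ds \<in> gtuples k n \<and> es \<in> gtuples k n \<and> list_all2 gassoc ds es}"

definition gt :: "nat \<Rightarrow> nat \<Rightarrow> nat" where
  "gt k n = card (gtuples k n // gtuple_rel k n)"

end

theory Submission
  imports Defs
begin

text \<open>
  For a Gaussian prime \<open>p\<close> not dividing \<open>w\<close>, a factorization of \<open>p\<^sup>e w\<close> into \<open>k\<close> factors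
  splits uniquely into the \<open>p\<close>-exponents of the factors (a weak composition of \<open>e\<close> into \<open>k\<close>
  parts) and a factorization of \<open>w\<close>; hence \<open>t\<^sub>k(p\<^sup>e w) = C(e+k-1, e) t\<^sub>k(w)\<close>.
  Writing \<open>n = 2\<^sup>a m\<close> with \<open>m\<close> odd and \<open>2 = -\<i>(1+\<i>)\<^sup>2\<close>, the factor at \<open>1+\<i>\<close> is
  \<open>C(2a+k-1, 2a) \<le> C(k+1,2)\<^sup>a\<close>, and an odd prime power \<open>p\<^sup>e\<close> (where \<open>|p| \<ge> 2\<close>, as no norm
  equals 3) contributes at most \<open>k\<^sup>e \<le> C(k+1,2)\<^sup>e\<close>; both estimates hold because splitting weak
  compositions shows that their number is submultiplicative in \<open>e\<close>. Both are at most \<open>C(k+1,2)\<^sup>x\<^sup>/\<^sup>2\<close> for the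
  absolute value \<open>x \<ge> 2\<close> of the prime power, since \<open>2e \<le> 2\<^sup>e\<close>, and as \<open>x + y \<le> x y\<close> for
  \<open>x, y \<ge> 2\<close> these bounds multiply to \<open>t\<^sub>k(n) \<le> C(k+1,2)\<^sup>n\<^sup>/\<^sup>2\<close>. Equality holds at \<open>n = 2\<close>,
  where \<open>t\<^sub>k(2) = C(k+1,2)\<close>.
\<close>

section \<open>Gaussian integers and their norm\<close>

lemma gauss_int_Complex [simp]: "gauss_int (Complex (of_int a) (of_int b))"
  by (simp add: gauss_int_def)

lemma gauss_intE:
  assumes "gauss_int z"
  obtains a b :: int where "z = Complex (of_int a) (of_int b)"
  using assms unfolding gauss_int_def by (metis Ints_cases complex_surj)

lemma gauss_int_0 [simp]: "gauss_int 0"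
  and gauss_int_1 [simp]: "gauss_int 1"
  and gauss_int_ii [simp]: "gauss_int \<i>"
  and gauss_int_of_nat [simp]: "gauss_int (of_nat n)"
  by (auto simp: gauss_int_def)

lemma gauss_int_add [intro]: "gauss_int a \<Longrightarrow> gauss_int b \<Longrightarrow> gauss_int (a + b)"
  and gauss_int_diff [intro]: "gauss_int a \<Longrightarrow> gauss_int b \<Longrightarrow> gauss_int (a - b)"
  and gauss_int_minus [intro]: "gauss_int a \<Longrightarrow> gauss_int (- a)"
  and gauss_int_mult [intro]: "gauss_int a \<Longrightarrow> gauss_int b \<Longrightarrow> gauss_int (a * b)"
  by (simp_all add: gauss_int_def)

lemma gauss_int_power [intro]: "gauss_int a \<Longrightarrow> gauss_int (a ^ n)"
  by (induction n) auto

lemma gauss_int_prod_list [intro]: "\<forall>d\<in>set ds. gauss_int d \<Longrightarrow> gauss_int (prod_list ds)"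
  by (induction ds) auto

definition gnorm :: "complex \<Rightarrow> nat" where
  "gnorm z = nat \<lfloor>(cmod z)\<^sup>2\<rfloor>"

lemma gnorm_Complex: "gnorm (Complex (of_int a) (of_int b)) = nat (a\<^sup>2 + b\<^sup>2)"
proof -
  have "(cmod (Complex (of_int a) (of_int b)))\<^sup>2 = of_int (a\<^sup>2 + b\<^sup>2)"
    by (simp add: cmod_power2)
  then show ?thesis
    unfolding gnorm_def by (metis floor_of_int)
qed

lemma of_nat_gnorm: "gauss_int z \<Longrightarrow> real (gnorm z) = (cmod z)\<^sup>2"
  by (elim gauss_intE) (simp add: gnorm_Complex cmod_power2)

lemma gnorm_1 [simp]: "gnorm 1 = 1"
  by (simp add: gnorm_def)

lemma gnorm_mult:
  assumes "gauss_int a" "gauss_int b"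
  shows "gnorm (a * b) = gnorm a * gnorm b"
proof -
  have "real (gnorm (a * b)) = real (gnorm a * gnorm b)"
    using assms by (simp add: of_nat_gnorm gauss_int_mult norm_mult power_mult_distrib)
  then show ?thesis by (simp only: of_nat_eq_iff)
qed

lemma gnorm_power: "gauss_int a \<Longrightarrow> gnorm (a ^ n) = gnorm a ^ n"
  by (induction n) (simp_all add: gnorm_mult gauss_int_power)

lemma gnorm_prod_list: "\<forall>d\<in>set ds. gauss_int d \<Longrightarrow> gnorm (prod_list ds) = (\<Prod>d\<leftarrow>ds. gnorm d)"
  by (induction ds) (simp_all add: gnorm_mult gauss_int_prod_list)

lemma gnorm_eq_0_iff:
  assumes "gauss_int z"
  shows "gnorm z = 0 \<longleftrightarrow> z = 0"
proof -
  have "gnorm z = 0 \<longleftrightarrow> (cmod z)\<^sup>2 = 0"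
    using assms by (simp flip: of_nat_gnorm)
  then show ?thesis by simp
qed

lemma gnorm_of_nat [simp]: "gnorm (of_nat m) = m\<^sup>2"
proof -
  have "real (gnorm (of_nat m)) = real (m\<^sup>2)"
    by (simp add: of_nat_gnorm)
  then show ?thesis by (simp only: of_nat_eq_iff)
qed

lemma cmod_ge_1:
  assumes "gauss_int z" "z \<noteq> 0"
  shows "1 \<le> cmod z"
proof -
  have "1 \<le> real (gnorm z)" using assms gnorm_eq_0_iff by fastforce
  then have "1\<^sup>2 \<le> (cmod z)\<^sup>2" using of_nat_gnorm[OF assms(1)] by simp
  then show ?thesis by (rule power2_le_imp_le) simp
qed

lemma small_sum_of_squares:
  fixes a b :: int
  assumes "a\<^sup>2 + b\<^sup>2 \<le> 3"
  shows "a \<in> {-1, 0, 1} \<and> b \<in> {-1, 0, 1}"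
proof -
  have "\<bar>x\<bar> \<le> 1" if "x\<^sup>2 \<le> 3" for x :: int
  proof (rule ccontr)
    assume "\<not> \<bar>x\<bar> \<le> 1"
    then have "2\<^sup>2 \<le> \<bar>x\<bar>\<^sup>2" by (intro power_mono) auto
    with that show False by simp
  qed
  then have "\<bar>a\<bar> \<le> 1" "\<bar>b\<bar> \<le> 1"
    using assms by (smt (verit) zero_le_power2)+
  then show ?thesis by auto
qed

definition gunit :: "complex \<Rightarrow> bool" where
  "gunit u \<longleftrightarrow> u \<in> {1, -1, \<i>, -\<i>}"

lemma gnorm_gunit: "gunit u \<Longrightarrow> gnorm u = 1"
  by (auto simp: gunit_def gnorm_def)

lemma gnorm_eq_1_iff: "gauss_int z \<Longrightarrow> gnorm z = 1 \<longleftrightarrow> gunit z"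
proof (elim gauss_intE)
  fix a b :: int
  assume z: "z = Complex (of_int a) (of_int b)"
  show "gnorm z = 1 \<longleftrightarrow> gunit z"
  proof
    assume "gnorm z = 1"
    then have "a\<^sup>2 + b\<^sup>2 = 1" by (simp add: z gnorm_Complex nat_eq_iff)
    with small_sum_of_squares[of a b]
    have "(a = 1 \<or> a = -1) \<and> b = 0 \<or> a = 0 \<and> (b = 1 \<or> b = -1)" by auto
    then show "gunit z" by (elim disjE conjE) (auto simp: z gunit_def complex_eq_iff)
  qed (rule gnorm_gunit)
qed

lemma gnorm_neq_3: "gauss_int z \<Longrightarrow> gnorm z \<noteq> 3"
proof (elim gauss_intE)
  fix a b :: int
  assume z: "z = Complex (of_int a) (of_int b)"
  show "gnorm z \<noteq> 3"
  proof
    assume "gnorm z = 3"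
    then have "a\<^sup>2 + b\<^sup>2 = 3" by (simp add: z gnorm_Complex nat_eq_iff)
    with small_sum_of_squares[of a b] show False by auto
  qed
qed

lemma gunit_gauss_int: "gunit u \<Longrightarrow> gauss_int u"
  and gunit_nonzero: "gunit u \<Longrightarrow> u \<noteq> 0"
  and gunit_mult: "gunit u \<Longrightarrow> gunit v \<Longrightarrow> gunit (u * v)"
  and gunit_inverse: "gunit u \<Longrightarrow> gunit (inverse u)"
  and gunit_minus_ii: "gunit (- \<i>)"
  by (auto simp: gunit_def)

lemma gunit_power: "gunit u \<Longrightarrow> gunit (u ^ n)"
  by (induction n) (auto simp: gunit_mult gunit_def)

lemma gassoc_iff: "gassoc a b \<longleftrightarrow> (\<exists>u. gunit u \<and> b = u * a)"
  unfolding gassoc_def gunit_def by blast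

lemma gassoc_refl [simp]: "gassoc a a"
  by (auto simp: gassoc_def)

lemma gassoc_sym: "gassoc a b \<Longrightarrow> gassoc b a"
  unfolding gassoc_iff
proof (elim exE conjE)
  fix u assume "gunit u" "b = u * a"
  then have "a = inverse u * b" by (simp add: gunit_nonzero)
  with \<open>gunit u\<close> show "\<exists>v. gunit v \<and> a = v * b" using gunit_inverse by blast
qed

lemma gassoc_trans: "gassoc a b \<Longrightarrow> gassoc b c \<Longrightarrow> gassoc a c"
  unfolding gassoc_iff by (metis gunit_mult mult.assoc)

lemma gassoc_mult: "gassoc a b \<Longrightarrow> gassoc c d \<Longrightarrow> gassoc (a * c) (b * d)"
  unfolding gassoc_iff by (metis gunit_mult mult.assoc mult.commute)

lemma gassoc_unit_mult: "gunit u \<Longrightarrow> gassoc a (u * a)"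
  unfolding gassoc_iff by blast

lemma gassoc_units: "gunit u \<Longrightarrow> gunit v \<Longrightarrow> gassoc u v"
  by (auto simp: gassoc_def gunit_def)

lemma gnorm_gassoc: "gassoc a b \<Longrightarrow> gauss_int a \<Longrightarrow> gnorm b = gnorm a"
  unfolding gassoc_iff using gunit_gauss_int gnorm_gunit gnorm_mult by auto

section \<open>Divisibility and Gaussian primes\<close>

definition gdvd :: "complex \<Rightarrow> complex \<Rightarrow> bool" where
  "gdvd a b \<longleftrightarrow> (\<exists>c. gauss_int c \<and> b = a * c)"

lemma gdvdI [intro]: "gauss_int c \<Longrightarrow> b = a * c \<Longrightarrow> gdvd a b"
  unfolding gdvd_def by blast

lemma gdvd_0 [simp]: "gdvd a 0"
  by (rule gdvdI[of 0]) simp_all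

lemma gdvd_mult_right: "gdvd a b \<Longrightarrow> gauss_int c \<Longrightarrow> gdvd a (b * c)"
  unfolding gdvd_def by (metis gauss_int_mult mult.assoc)

lemma gdvd_mult_left: "gdvd a b \<Longrightarrow> gauss_int c \<Longrightarrow> gdvd a (c * b)"
  using gdvd_mult_right by (simp add: mult.commute)

lemma gdvd_prod_list:
  "gdvd p d \<Longrightarrow> d \<in> set ds \<Longrightarrow> \<forall>x\<in>set ds. gauss_int x \<Longrightarrow> gdvd p (prod_list ds)"
  by (induction ds) (auto intro: gdvd_mult_left gdvd_mult_right)

lemma gdvd_gassoc: "gdvd p a \<Longrightarrow> gassoc a b \<Longrightarrow> gdvd p b"
  unfolding gassoc_iff by (metis gdvd_mult_left gunit_gauss_int)

definition gprime :: "complex \<Rightarrow> bool" where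
  "gprime p \<longleftrightarrow> gauss_int p \<and> gnorm p > 1 \<and>
     (\<forall>a b. gauss_int a \<longrightarrow> gauss_int b \<longrightarrow> p = a * b \<longrightarrow> gunit a \<or> gunit b)"

lemma gprime_gauss_int: "gprime p \<Longrightarrow> gauss_int p"
  and gprime_gnorm: "gprime p \<Longrightarrow> gnorm p > 1"
  by (simp_all add: gprime_def)

lemma gprime_nonzero: "gprime p \<Longrightarrow> p \<noteq> 0"
  using gprime_gnorm by (fastforce simp: gnorm_def)

lemma gprime_not_gdvd_1: "gprime p \<Longrightarrow> \<not> gdvd p 1"
proof
  assume "gprime p" "gdvd p 1"
  then obtain c where "gauss_int c" "1 = p * c" unfolding gdvd_def by blast
  then have "gnorm p * gnorm c = 1" using gprime_gauss_int[OF \<open>gprime p\<close>]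
    by (metis gnorm_1 gnorm_mult)
  with gprime_gnorm[OF \<open>gprime p\<close>] show False by simp
qed

lemma gauss_int_div_mod:
  assumes "gauss_int a" "gauss_int b" "b \<noteq> 0"
  obtains q where "gauss_int q" "gnorm (a - q * b) < gnorm b"
proof -
  define c where "c = a / b"
  define q where "q = Complex (of_int (round (Re c))) (of_int (round (Im c)))"
  have "\<bar>Re (c - q)\<bar> \<le> 1/2" "\<bar>Im (c - q)\<bar> \<le> 1/2"
    using of_int_round_abs_le[of "Re c"] of_int_round_abs_le[of "Im c"]
    by (simp_all add: q_def abs_minus_commute)
  then have "(Re (c - q))\<^sup>2 \<le> (1/2)\<^sup>2" "(Im (c - q))\<^sup>2 \<le> (1/2)\<^sup>2"
    by (simp_all add: abs_le_square_iff [symmetric])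
  then have "(cmod (c - q))\<^sup>2 < 1\<^sup>2"
    unfolding cmod_power2 by (simp add: power_divide)
  then have "cmod (c - q) < 1"
    by (rule power2_less_imp_less) simp
  moreover have "a - q * b = (c - q) * b"
    using assms(3) by (simp add: c_def algebra_simps)
  ultimately have "(cmod (a - q * b))\<^sup>2 < (cmod b)\<^sup>2"
    using assms(3) by (simp add: norm_mult power_strict_mono)
  moreover have "gauss_int q" by (simp add: q_def)
  ultimately show ?thesis
    using that assms by (simp add: gauss_int_diff gauss_int_mult flip: of_nat_gnorm)
qed

text \<open>An element of minimal norm among the nonzero combinations \<open>x * p + y * a\<close> divides both
  \<open>p\<close> and \<open>a\<close>, by division with remainder.\<close>

lemma gprime_bezout:
  assumes p: "gprime p" and a: "gauss_int a" "\<not> gdvd p a"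
  obtains x y where "gauss_int x" "gauss_int y" "x * p + y * a = 1"
proof -
  have gp: "gauss_int p" using p by (rule gprime_gauss_int)
  define comb where "comb g \<longleftrightarrow> g \<noteq> 0 \<and> (\<exists>x y. gauss_int x \<and> gauss_int y \<and> g = x * p + y * a)"
    for g
  have "comb p"
    unfolding comb_def using gprime_nonzero[OF p] by (intro conjI exI[of _ 1] exI[of _ 0]) simp_all
  then obtain g where g: "comb g" and g_min: "\<And>h. comb h \<Longrightarrow> gnorm g \<le> gnorm h"
    using ex_has_least_nat[of comb p gnorm] by blast
  then obtain x y where xy: "gauss_int x" "gauss_int y" "g = x * p + y * a" and "g \<noteq> 0"
    unfolding comb_def by blast
  have gg: "gauss_int g" using xy gp a by auto
  have g_dvd: "gdvd g (x' * p + y' * a)" if "gauss_int x'" "gauss_int y'" for x' y'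
  proof -
    have "gauss_int (x' * p + y' * a)" using that gp a by auto
    then obtain q where q: "gauss_int q" "gnorm (x' * p + y' * a - q * g) < gnorm g"
      by (rule gauss_int_div_mod[OF _ gg \<open>g \<noteq> 0\<close>])
    have "\<not> comb (x' * p + y' * a - q * g)"
      using g_min q(2) by (metis not_le)
    moreover have "x' * p + y' * a - q * g = (x' - q * x) * p + (y' - q * y) * a"
      using xy by (simp add: algebra_simps)
    moreover have "gauss_int (x' - q * x)" "gauss_int (y' - q * y)"
      using q xy that by auto
    ultimately have "x' * p + y' * a - q * g = 0"
      unfolding comb_def by blast
    then show ?thesis using q(1) by (intro gdvdI[of q]) (simp_all add: algebra_simps)
  qed
  obtain c where c: "gauss_int c" "p = g * c"
    using g_dvd[of 1 0] unfolding gdvd_def by auto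
  obtain d where d: "gauss_int d" "a = g * d"
    using g_dvd[of 0 1] unfolding gdvd_def by auto
  have "\<not> gunit c"
  proof
    assume "gunit c"
    then have "a = p * (inverse c * d)"
      using c(2) d(2) gunit_nonzero by (simp add: field_simps)
    then show False
      using a(2) \<open>gunit c\<close> d(1) by (metis gdvdI gauss_int_mult gunit_gauss_int gunit_inverse)
  qed
  then have "gunit g"
    using p c gg unfolding gprime_def by blast
  have "inverse g * x * p + inverse g * y * a = inverse g * (x * p + y * a)"
    by (simp add: algebra_simps)
  also have "\<dots> = 1"
    using xy(3) \<open>g \<noteq> 0\<close> by simp
  finally have "inverse g * x * p + inverse g * y * a = 1" .
  moreover have "gauss_int (inverse g * x)" "gauss_int (inverse g * y)"
    using \<open>gunit g\<close> xy by (simp_all add: gauss_int_mult gunit_gauss_int gunit_inverse)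
  ultimately show ?thesis using that by blast
qed

lemma gprime_gdvd_mult:
  assumes p: "gprime p" and "gauss_int a" "gauss_int b" "gdvd p (a * b)"
  shows "gdvd p a \<or> gdvd p b"
proof (cases "gdvd p a")
  case False
  then obtain x y where xy: "gauss_int x" "gauss_int y" "x * p + y * a = 1"
    using gprime_bezout[OF p \<open>gauss_int a\<close>] by blast
  obtain c where c: "gauss_int c" "a * b = p * c"
    using \<open>gdvd p (a * b)\<close> unfolding gdvd_def by blast
  have "b = (x * p + y * a) * b" using xy(3) by simp
  also have "\<dots> = p * (x * b + y * c)" using c(2) by (simp add: algebra_simps)
  finally have "b = p * (x * b + y * c)" .
  then show ?thesis
    using xy c \<open>gauss_int b\<close> by (auto intro: gdvdI[of "x * b + y * c"])
qed simp

lemma gprime_not_gdvd_prod_list: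
  assumes p: "gprime p" and "\<forall>w\<in>set ws. gauss_int w \<and> \<not> gdvd p w"
  shows "\<not> gdvd p (prod_list ws)"
  using assms(2)
proof (induction ws)
  case Nil
  then show ?case using gprime_not_gdvd_1[OF p] by simp
next
  case (Cons w ws)
  then show ?case using gprime_gdvd_mult[OF p, of w "prod_list ws"] by auto
qed

lemma gauss_int_prime_divisor:
  assumes "gauss_int z" "gnorm z > 1"
  obtains p c where "gprime p" "gauss_int c" "z = p * c"
  using assms
proof (induction "gnorm z" arbitrary: z thesis rule: less_induct)
  case less
  show ?case
  proof (cases "gprime z")
    case True
    then show ?thesis using less.prems(1)[of z 1] by simp
  next
    case False
    then obtain a b where ab: "gauss_int a" "gauss_int b" "z = a * b" "\<not> gunit a" "\<not> gunit b"
      using less.prems unfolding gprime_def by blast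
    have "gnorm z = gnorm a * gnorm b" using ab gnorm_mult by simp
    moreover have "gnorm a \<noteq> 1" "gnorm b \<noteq> 1" using ab gnorm_eq_1_iff by auto
    ultimately have "gnorm a > 1" "gnorm a < gnorm z"
      using less.prems(3) by (auto simp: nat_neq_iff)
    then obtain p c where "gprime p" "gauss_int c" "a = p * c"
      using less.hyps ab(1) by blast
    then show ?thesis
      using less.prems(1) ab by (metis gauss_int_mult mult.assoc)
  qed
qed

lemma gprime_power_decomposition:
  assumes p: "gprime p" and "gauss_int z" "z \<noteq> 0"
  obtains e w where "gauss_int w" "\<not> gdvd p w" "z = p ^ e * w"
  using assms(2,3)
proof (induction "gnorm z" arbitrary: z thesis rule: less_induct)
  case less
  show ?case
  proof (cases "gdvd p z")
    case False
    then show ?thesis using less.prems(1)[of z 0] less.prems(2) by simp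
  next
    case True
    then obtain c where c: "gauss_int c" "z = p * c" unfolding gdvd_def by blast
    have "c \<noteq> 0" using c less.prems(3) by auto
    then have "gnorm c < gnorm z"
      using c gprime_gnorm[OF p] gnorm_mult[OF gprime_gauss_int[OF p] c(1)] gnorm_eq_0_iff
      by auto
    then obtain e w where "gauss_int w" "\<not> gdvd p w" "c = p ^ e * w"
      using less.hyps c(1) \<open>c \<noteq> 0\<close> by blast
    then show ?thesis
      using less.prems(1)[of w "Suc e"] c(2) by (simp add: mult.assoc)
  qed
qed

lemma power_mult_cancel_le:
  assumes "p \<noteq> 0" "gauss_int p" "gauss_int v" "\<not> gdvd p u" "p ^ a * u = p ^ b * v"
  shows "b \<le> a"
proof (rule ccontr)
  assume "\<not> b \<le> a"
  then obtain d where "b = a + Suc d" by (metis add_Suc_right less_imp_Suc_add not_le)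
  then have "p ^ a * u = p ^ a * (p * (p ^ d * v))"
    using assms(5) by (simp add: power_add mult_ac)
  then have "u = p * (p ^ d * v)" using assms(1) by simp
  then show False
    using assms by (metis gdvdI gauss_int_mult gauss_int_power)
qed

lemma gprime_power_gassoc_cancel:
  assumes p: "gprime p" and u: "gauss_int u" "\<not> gdvd p u" and v: "gauss_int v" "\<not> gdvd p v"
    and "gassoc (p ^ a * u) (p ^ b * v)"
  shows "a = b \<and> gassoc u v"
proof -
  obtain c where c: "gunit c" "p ^ b * v = p ^ a * (c * u)"
    using assms(6) unfolding gassoc_iff by (auto simp: mult_ac)
  have "\<not> gdvd p (c * u)"
  proof
    assume "gdvd p (c * u)"
    then have "gdvd p (inverse c * (c * u))"
      using c(1) by (simp add: gdvd_mult_left gunit_gauss_int gunit_inverse)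
    then show False using u(2) gunit_nonzero[OF c(1)] by (simp add: mult.assoc [symmetric])
  qed
  note cancel = power_mult_cancel_le[OF gprime_nonzero[OF p] gprime_gauss_int[OF p]]
  have "a = b"
    using cancel[OF v(1) \<open>\<not> gdvd p (c * u)\<close> c(2)[symmetric]]
      cancel[OF gauss_int_mult[OF gunit_gauss_int[OF c(1)] u(1)] v(2) c(2)] by simp
  then have "v = c * u" using c(2) gprime_nonzero[OF p] by simp
  then show ?thesis using \<open>a = b\<close> c(1) gassoc_unit_mult by blast
qed

section \<open>Weak compositions\<close>

definition weak_compositions :: "nat \<Rightarrow> nat \<Rightarrow> nat list set" where
  "weak_compositions k e = {l. length l = k \<and> sum_list l = e}"

lemma card_weak_compositions: "card (weak_compositions k e) = (e + k - 1) choose e"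
  unfolding weak_compositions_def by (rule card_length_sum_list)

lemma finite_weak_compositions: "finite (weak_compositions k e)"
proof (rule finite_subset)
  show "weak_compositions k e \<subseteq> {l. set l \<subseteq> {0..e} \<and> length l = k}"
    by (auto simp: weak_compositions_def member_le_sum_list)
qed (rule finite_lists_length_eq, simp)

lemma sum_list_split:
  fixes l :: "nat list"
  assumes "sum_list l = a + b"
  shows "\<exists>l1 l2. length l1 = length l \<and> length l2 = length l \<and>
           sum_list l1 = a \<and> sum_list l2 = b \<and> map2 (+) l1 l2 = l"
  using assms
proof (induction l arbitrary: a b)
  case (Cons x xs)
  show ?case
  proof (cases "a \<le> sum_list xs")
    case True
    then have "sum_list xs = a + (sum_list xs - a)" by simp
    from Cons.IH[OF this] obtain l1 l2 where l: "length l1 = length xs" "length l2 = length xs"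
      "sum_list l1 = a" "sum_list l2 = sum_list xs - a" "map2 (+) l1 l2 = xs"
      by blast
    have "sum_list (x # l2) = b" using l(4) Cons.prems True by simp
    with l show ?thesis by (intro exI[of _ "0 # l1"] exI[of _ "x # l2"]) simp
  next
    case False
    from Cons.IH[of "sum_list xs" 0] obtain l1 l2 where l: "length l1 = length xs"
      "length l2 = length xs" "sum_list l1 = sum_list xs" "sum_list l2 = 0" "map2 (+) l1 l2 = xs"
      by auto
    have "sum_list ((a - sum_list xs) # l1) = a" "sum_list ((x + sum_list xs - a) # l2) = b"
      "x = (a - sum_list xs) + (x + sum_list xs - a)"
      using l(3,4) Cons.prems False by simp_all
    with l show ?thesis
      by (intro exI[of _ "(a - sum_list xs) # l1"] exI[of _ "(x + sum_list xs - a) # l2"]) simp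
  qed
qed simp

lemma card_weak_compositions_add:
  "card (weak_compositions k (a + b)) \<le> card (weak_compositions k a) * card (weak_compositions k b)"
proof -
  have fin: "finite (weak_compositions k a \<times> weak_compositions k b)"
    by (simp add: finite_weak_compositions)
  have "weak_compositions k (a + b) \<subseteq>
          (\<lambda>(l1, l2). map2 (+) l1 l2) ` (weak_compositions k a \<times> weak_compositions k b)"
  proof
    fix l assume "l \<in> weak_compositions k (a + b)"
    then have "sum_list l = a + b" "length l = k" by (simp_all add: weak_compositions_def)
    then obtain l1 l2 where "length l1 = k" "length l2 = k" "sum_list l1 = a" "sum_list l2 = b"
      "map2 (+) l1 l2 = l"
      using sum_list_split[of l a b] by metis
    then show "l \<in> (\<lambda>(l1, l2). map2 (+) l1 l2) ` (weak_compositions k a \<times> weak_compositions k b)"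
      by (intro image_eqI[of _ _ "(l1, l2)"]) (simp_all add: weak_compositions_def)
  qed
  then have "card (weak_compositions k (a + b)) \<le>
               card ((\<lambda>(l1, l2). map2 (+) l1 l2) ` (weak_compositions k a \<times> weak_compositions k b))"
    using fin by (intro card_mono) simp_all
  also have "\<dots> \<le> card (weak_compositions k a \<times> weak_compositions k b)"
    using fin by (rule card_image_le)
  finally show ?thesis by (simp add: card_cartesian_product)
qed

lemma card_weak_compositions_mult:
  "card (weak_compositions k (j * e)) \<le> card (weak_compositions k j) ^ e"
proof (induction e)
  case (Suc e)
  have "card (weak_compositions k (j * Suc e)) \<le>
          card (weak_compositions k j) * card (weak_compositions k (j * e))"
    using card_weak_compositions_add[of k j "j * e"] by simp
  also have "\<dots> \<le> card (weak_compositions k j) * card (weak_compositions k j) ^ e"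
    using Suc.IH by simp
  finally show ?case by simp
qed (simp add: card_weak_compositions)

section \<open>Factorizations into \<open>k\<close> factors\<close>

lemma card_quotient_eq_card_image:
  assumes "R \<subseteq> A \<times> A" and "\<And>x y. x \<in> A \<Longrightarrow> y \<in> A \<Longrightarrow> (x, y) \<in> R \<longleftrightarrow> f x = f y"
  shows "card (A // R) = card (f ` A)"
proof -
  have "R `` {x} = {y \<in> A. f y = f x}" if "x \<in> A" for x
    using assms that by auto
  then have "A // R = (\<lambda>b. {y \<in> A. f y = b}) ` f ` A"
    unfolding quotient_def by auto
  moreover have "inj_on (\<lambda>b. {y \<in> A. f y = b}) (f ` A)"
    by (auto simp: inj_on_def)
  ultimately show ?thesis by (simp add: card_image)
qed

lemma prod_list_nat_eq_1D: "prod_list (xs :: nat list) = 1 \<Longrightarrow> x \<in> set xs \<Longrightarrow> x = 1"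
  by (induction xs) auto

definition factor_tuples :: "nat \<Rightarrow> complex \<Rightarrow> complex list set" where
  "factor_tuples k z =
     {ds. length ds = k \<and> (\<forall>d\<in>set ds. gauss_int d \<and> d \<noteq> 0) \<and> gassoc (prod_list ds) z}"

definition factor_tuple_rel :: "nat \<Rightarrow> complex \<Rightarrow> (complex list \<times> complex list) set" where
  "factor_tuple_rel k z =
     {(ds, es). ds \<in> factor_tuples k z \<and> es \<in> factor_tuples k z \<and> list_all2 gassoc ds es}"

definition num_factorizations :: "nat \<Rightarrow> complex \<Rightarrow> nat" where
  "num_factorizations k z = card (factor_tuples k z // factor_tuple_rel k z)"

lemma gt_eq_num_factorizations: "gt k n = num_factorizations k (of_nat n)"
  unfolding gt_def gtuples_def gtuple_rel_def num_factorizations_def factor_tuples_def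
    factor_tuple_rel_def by simp

lemma factor_tuples_gassoc: "gassoc z z' \<Longrightarrow> factor_tuples k z = factor_tuples k z'"
  unfolding factor_tuples_def using gassoc_trans gassoc_sym by blast

lemma num_factorizations_gassoc: "gassoc z z' \<Longrightarrow> num_factorizations k z = num_factorizations k z'"
  unfolding num_factorizations_def factor_tuple_rel_def by (simp add: factor_tuples_gassoc)

lemma equiv_factor_tuple_rel: "equiv (factor_tuples k z) (factor_tuple_rel k z)"
proof (rule equivI)
  show "refl_on (factor_tuples k z) (factor_tuple_rel k z)"
    unfolding refl_on_def factor_tuple_rel_def by (auto intro: list_all2_refl)
  show "sym (factor_tuple_rel k z)"
    unfolding sym_def factor_tuple_rel_def by (auto simp: list_all2_conv_all_nth gassoc_sym)
  show "trans (factor_tuple_rel k z)"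
    unfolding trans_def factor_tuple_rel_def
    using list_all2_trans[of gassoc gassoc gassoc] gassoc_trans by blast
  show "factor_tuple_rel k z \<subseteq> factor_tuples k z \<times> factor_tuples k z"
    unfolding factor_tuple_rel_def by blast
qed

lemma num_factorizations_gunit:
  assumes u: "gunit u" and "k \<ge> 1"
  shows "num_factorizations k u = 1"
proof -
  have units: "gunit d" if "ds \<in> factor_tuples k u" "d \<in> set ds" for ds d
  proof -
    have ds: "\<forall>d\<in>set ds. gauss_int d" "gassoc (prod_list ds) u"
      using that(1) by (auto simp: factor_tuples_def)
    then have "(\<Prod>d\<leftarrow>ds. gnorm d) = 1"
      using gnorm_gassoc[OF ds(2)] gnorm_gunit[OF u]
      by (simp add: gnorm_prod_list gauss_int_prod_list)
    moreover have "gnorm d \<in> set (map gnorm ds)" using that(2) by simp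
    ultimately have "gnorm d = 1" by (rule prod_list_nat_eq_1D)
    then show ?thesis using gnorm_eq_1_iff ds(1) that(2) by blast
  qed
  have "u # replicate (k - 1) 1 \<in> factor_tuples k u"
    using assms gunit_gauss_int gunit_nonzero by (auto simp: factor_tuples_def)
  then have "(\<lambda>ds. 0::nat) ` factor_tuples k u = {0}" by blast
  moreover have "card (factor_tuples k u // factor_tuple_rel k u) =
                   card ((\<lambda>ds. 0::nat) ` factor_tuples k u)"
  proof (rule card_quotient_eq_card_image)
    fix ds es assume tuples: "ds \<in> factor_tuples k u" "es \<in> factor_tuples k u"
    then have "length ds = length es" by (simp add: factor_tuples_def)
    then have "list_all2 gassoc ds es"
      using gassoc_units units[OF tuples(1) nth_mem] units[OF tuples(2) nth_mem]
      by (simp add: list_all2_conv_all_nth)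
    with tuples show "(ds, es) \<in> factor_tuple_rel k u \<longleftrightarrow> (0::nat) = 0"
      by (simp add: factor_tuple_rel_def)
  qed (auto simp: factor_tuple_rel_def)
  ultimately show ?thesis
    unfolding num_factorizations_def by simp
qed

lemma not_gdvd_factor_tuples:
  assumes "\<not> gdvd p w" "ds \<in> factor_tuples k w" "d \<in> set ds"
  shows "\<not> gdvd p d"
  using assms gdvd_prod_list[of p d ds] gdvd_gassoc by (auto simp: factor_tuples_def)

section \<open>Multiplicativity at a prime\<close>

definition gmultiplicity :: "complex \<Rightarrow> complex \<Rightarrow> nat" where
  "gmultiplicity p d = (SOME e. \<exists>w. gauss_int w \<and> \<not> gdvd p w \<and> d = p ^ e * w)"

definition gcoprime_part :: "complex \<Rightarrow> complex \<Rightarrow> complex" where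
  "gcoprime_part p d = (SOME w. gauss_int w \<and> \<not> gdvd p w \<and> d = p ^ gmultiplicity p d * w)"

context
  fixes p :: complex
  assumes p: "gprime p"
begin

lemma gmultiplicity_decompose:
  assumes "gauss_int d" "d \<noteq> 0"
  shows "gauss_int (gcoprime_part p d)" "\<not> gdvd p (gcoprime_part p d)"
    and "d = p ^ gmultiplicity p d * gcoprime_part p d"
proof -
  have "\<exists>e w. gauss_int w \<and> \<not> gdvd p w \<and> d = p ^ e * w"
    using gprime_power_decomposition[OF p assms] by metis
  then have "\<exists>w. gauss_int w \<and> \<not> gdvd p w \<and> d = p ^ gmultiplicity p d * w"
    unfolding gmultiplicity_def by (rule someI_ex)
  then show "gauss_int (gcoprime_part p d)" "\<not> gdvd p (gcoprime_part p d)"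
    "d = p ^ gmultiplicity p d * gcoprime_part p d"
    unfolding gcoprime_part_def by (metis (mono_tags, lifting) someI_ex)+
qed

lemma gmultiplicity_gassoc_iff:
  assumes "gauss_int d" "d \<noteq> 0" "gauss_int d'" "d' \<noteq> 0"
  shows "gassoc d d' \<longleftrightarrow> gmultiplicity p d = gmultiplicity p d' \<and>
           gassoc (gcoprime_part p d) (gcoprime_part p d')"
  using gprime_power_gassoc_cancel[OF p gmultiplicity_decompose(1,2)[OF assms(1,2)]
      gmultiplicity_decompose(1,2)[OF assms(3,4)]]
    gassoc_mult[OF gassoc_refl] gmultiplicity_decompose(3)[OF assms(1,2)]
    gmultiplicity_decompose(3)[OF assms(3,4)]
  by metis

lemma gmultiplicity_power_mult:
  assumes "gauss_int w" "\<not> gdvd p w"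
  shows "gmultiplicity p (p ^ e * w) = e" "gcoprime_part p (p ^ e * w) = w"
proof -
  have "w \<noteq> 0" using assms(2) by auto
  then have d: "gauss_int (p ^ e * w)" "p ^ e * w \<noteq> 0"
    using assms(1) gprime_gauss_int[OF p] gprime_nonzero[OF p] by auto
  have "gassoc (p ^ gmultiplicity p (p ^ e * w) * gcoprime_part p (p ^ e * w)) (p ^ e * w)"
    using gmultiplicity_decompose(3)[OF d] by simp
  then show e: "gmultiplicity p (p ^ e * w) = e"
    using gprime_power_gassoc_cancel[OF p gmultiplicity_decompose(1,2)[OF d] assms] by blast
  have "p ^ e * gcoprime_part p (p ^ e * w) = p ^ e * w"
    using gmultiplicity_decompose(3)[OF d] unfolding e by (rule sym)
  then show "gcoprime_part p (p ^ e * w) = w"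
    using gprime_nonzero[OF p] by simp
qed

lemma prod_list_gcoprime_part:
  assumes "\<forall>d\<in>set ds. gauss_int d \<and> d \<noteq> 0"
  shows "prod_list ds = p ^ (\<Sum>d\<leftarrow>ds. gmultiplicity p d) * (\<Prod>d\<leftarrow>ds. gcoprime_part p d)"
  using assms
proof (induction ds)
  case (Cons d ds)
  then show ?case
    using gmultiplicity_decompose(3)[of d] by (simp add: power_add mult_ac)
qed simp

lemma list_all2_gassoc_iff_gmultiplicity:
  assumes "\<forall>d\<in>set ds. gauss_int d \<and> d \<noteq> 0" "\<forall>d\<in>set es. gauss_int d \<and> d \<noteq> 0"
    and "length ds = length es"
  shows "list_all2 gassoc ds es \<longleftrightarrow> map (gmultiplicity p) ds = map (gmultiplicity p) es \<and>
           list_all2 gassoc (map (gcoprime_part p) ds) (map (gcoprime_part p) es)"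
  using assms gmultiplicity_gassoc_iff
  by (auto simp: list_all2_conv_all_nth list_eq_iff_nth_eq)

lemma factor_tuples_gprime_power_mult:
  assumes w: "gauss_int w" "\<not> gdvd p w" and ds: "ds \<in> factor_tuples k (p ^ e * w)"
  shows "map (gcoprime_part p) ds \<in> factor_tuples k w"
    and "map (gmultiplicity p) ds \<in> weak_compositions k e"
proof -
  have ds_nz: "\<forall>d\<in>set ds. gauss_int d \<and> d \<noteq> 0" "length ds = k"
    using ds by (auto simp: factor_tuples_def)
  have cop: "\<forall>v\<in>set (map (gcoprime_part p) ds). gauss_int v \<and> \<not> gdvd p v \<and> v \<noteq> 0"
    using ds_nz gmultiplicity_decompose by fastforce
  have "gassoc (p ^ (\<Sum>d\<leftarrow>ds. gmultiplicity p d) * (\<Prod>d\<leftarrow>ds. gcoprime_part p d)) (p ^ e * w)"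
    using ds prod_list_gcoprime_part[OF ds_nz(1)] by (simp add: factor_tuples_def)
  moreover have "gauss_int (\<Prod>d\<leftarrow>ds. gcoprime_part p d)" "\<not> gdvd p (\<Prod>d\<leftarrow>ds. gcoprime_part p d)"
    using cop gprime_not_gdvd_prod_list[OF p] gauss_int_prod_list[of "map (gcoprime_part p) ds"]
    by auto
  ultimately have "(\<Sum>d\<leftarrow>ds. gmultiplicity p d) = e \<and> gassoc (\<Prod>d\<leftarrow>ds. gcoprime_part p d) w"
    using gprime_power_gassoc_cancel[OF p _ _ w] by blast
  then show "map (gcoprime_part p) ds \<in> factor_tuples k w"
    and "map (gmultiplicity p) ds \<in> weak_compositions k e"
    using cop ds_nz(2) by (auto simp: factor_tuples_def weak_compositions_def)
qed

lemma num_factorizations_gprime_power_mult: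
  assumes w: "gauss_int w" "\<not> gdvd p w"
  shows "num_factorizations k (p ^ e * w) = ((e + k - 1) choose e) * num_factorizations k w"
proof -
  let ?A = "factor_tuples k (p ^ e * w)"
  let ?T = "factor_tuples k w" and ?R = "factor_tuple_rel k w"
  define F where "F ds = (map (gmultiplicity p) ds, ?R `` {map (gcoprime_part p) ds})" for ds
  have "card (?A // factor_tuple_rel k (p ^ e * w)) = card (F ` ?A)"
  proof (rule card_quotient_eq_card_image)
    fix ds es assume ds: "ds \<in> ?A" and es: "es \<in> ?A"
    have "(map (gcoprime_part p) ds, map (gcoprime_part p) es) \<in> ?R \<longleftrightarrow>
            ?R `` {map (gcoprime_part p) ds} = ?R `` {map (gcoprime_part p) es}"
      using eq_equiv_class_iff[OF equiv_factor_tuple_rel]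
        factor_tuples_gprime_power_mult(1)[OF w ds] factor_tuples_gprime_power_mult(1)[OF w es]
      by metis
    then show "(ds, es) \<in> factor_tuple_rel k (p ^ e * w) \<longleftrightarrow> F ds = F es"
      using ds es factor_tuples_gprime_power_mult(1)[OF w]
        list_all2_gassoc_iff_gmultiplicity[of ds es]
      by (auto simp: F_def factor_tuple_rel_def factor_tuples_def)
  qed (auto simp: factor_tuple_rel_def)
  also have "F ` ?A = weak_compositions k e \<times> ?T // ?R"
  proof
    show "F ` ?A \<subseteq> weak_compositions k e \<times> ?T // ?R"
      using factor_tuples_gprime_power_mult[OF w] by (auto simp: F_def intro: quotientI)
  next
    show "weak_compositions k e \<times> ?T // ?R \<subseteq> F ` ?A"
    proof (clarify elim!: quotientE)
      fix es ws assume es: "es \<in> weak_compositions k e" and ws: "ws \<in> ?T"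
      define ds where "ds = map (\<lambda>(i, v). p ^ i * v) (zip es ws)"
      have ws_good: "gauss_int v" "v \<noteq> 0" "\<not> gdvd p v" if "v \<in> set ws" for v
        using ws that not_gdvd_factor_tuples[OF w(2) ws] by (auto simp: factor_tuples_def)
      have len: "length es = length ws"
        using es ws by (simp add: weak_compositions_def factor_tuples_def)
      have mult: "map (gmultiplicity p) ds = es" and cop: "map (gcoprime_part p) ds = ws"
        using len gmultiplicity_power_mult[OF ws_good(1,3)]
        by (auto simp: ds_def map_zip_map2 list_eq_iff_nth_eq)
      have ds_nz: "\<forall>d\<in>set ds. gauss_int d \<and> d \<noteq> 0"
        using ws_good gprime_gauss_int[OF p] gprime_nonzero[OF p]
        by (auto simp: ds_def dest!: set_zip_rightD)
      have "prod_list ds = p ^ e * prod_list ws"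
        using prod_list_gcoprime_part[OF ds_nz] mult cop es
        by (simp add: weak_compositions_def)
      then have "ds \<in> ?A"
        using ds_nz ws len gassoc_mult[OF gassoc_refl, of "prod_list ws" w "p ^ e"]
        by (simp add: factor_tuples_def ds_def)
      moreover have "F ds = (es, ?R `` {ws})"
        using mult cop by (simp add: F_def)
      ultimately show "(es, ?R `` {ws}) \<in> F ` ?A" by (metis imageI)
    qed
  qed
  finally show ?thesis
    by (simp add: num_factorizations_def card_cartesian_product card_weak_compositions)
qed

end

section \<open>The bound \<open>t\<^sub>k(n) \<le> C(k+1,2)\<^sup>n\<^sup>/\<^sup>2\<close>\<close>

lemma card_weak_compositions_le_power: "card (weak_compositions k e) \<le> k ^ e"
  using card_weak_compositions_mult[of k 1 e] by (simp add: card_weak_compositions)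

lemma card_weak_compositions_even_le:
  "card (weak_compositions k (2 * a)) \<le> ((k + 1) choose 2) ^ a"
proof -
  have "card (weak_compositions k 2) = (k + 1) choose 2"
    by (cases k) (simp_all add: card_weak_compositions)
  then show ?thesis using card_weak_compositions_mult[of k 2 a] by simp
qed

lemma two_mult_le_two_power: "2 * real e \<le> 2 ^ e"
proof (induction e)
  case (Suc e)
  then show ?case by (cases e) simp_all
qed simp

text \<open>\<open>C\<^sup>x\<^sup>/\<^sup>2\<close>, truncated to \<open>1\<close> below \<open>x = 2\<close>: this makes it supermultiplicative on
  \<open>x, y \<ge> 1\<close>, because \<open>x + y \<le> x * y\<close> for \<open>x, y \<ge> 2\<close>.\<close>

definition half_power_bound :: "real \<Rightarrow> real \<Rightarrow> real" where
  "half_power_bound C x = (if x < 2 then 1 else C powr (x / 2))"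

lemma half_power_bound_ge_1: "1 \<le> C \<Longrightarrow> 1 \<le> half_power_bound C x"
  by (simp add: half_power_bound_def ge_one_powr_ge_zero)

lemma half_power_bound_mono:
  assumes "1 \<le> C" "x \<le> y"
  shows "half_power_bound C x \<le> half_power_bound C y"
  using assms by (auto simp: half_power_bound_def ge_one_powr_ge_zero intro: powr_mono)

lemma half_power_bound_mult:
  assumes "1 \<le> C" "1 \<le> x" "1 \<le> y"
  shows "half_power_bound C x * half_power_bound C y \<le> half_power_bound C (x * y)"
proof -
  consider "x < 2" | "y < 2" | "2 \<le> x" "2 \<le> y" by linarith
  then show ?thesis
  proof cases
    case 1
    then show ?thesis using half_power_bound_mono[OF assms(1), of y "x * y"] assms
      by (simp add: half_power_bound_def)
  next
    case 2
    then show ?thesis using half_power_bound_mono[OF assms(1), of x "x * y"] assms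
      by (simp add: half_power_bound_def)
  next
    case 3
    then have "x + y \<le> x * y"
      using mult_mono[of 1 "x - 1" 1 "y - 1"] by (simp add: algebra_simps)
    then have "C powr (x / 2) * C powr (y / 2) \<le> C powr (x * y / 2)"
      using assms(1) by (simp add: powr_add [symmetric] add_divide_distrib [symmetric] powr_mono)
    moreover have "2 \<le> x * y" using 3 mult_mono[of 1 x 2 y] by simp
    ultimately show ?thesis using 3 by (simp add: half_power_bound_def)
  qed
qed

lemma power_le_half_power_bound:
  assumes "1 \<le> C" "2 * real e \<le> x"
  shows "C ^ e \<le> half_power_bound C x"
proof (cases "x < 2")
  case True
  then have "e = 0" using assms(2) by simp
  then show ?thesis using True by (simp add: half_power_bound_def)
next
  case False
  then have "C powr real e \<le> C powr (x / 2)" using assms by (intro powr_mono) simp_all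
  then show ?thesis using False assms by (simp add: half_power_bound_def powr_realpow)
qed

lemma half_power_bound_le_powr:
  assumes "1 \<le> C" "0 \<le> x"
  shows "half_power_bound C x \<le> C powr (x / 2)"
  using assms by (simp add: half_power_bound_def ge_one_powr_ge_zero)

lemma gprime_odd_gnorm_cmod_ge_2:
  assumes p: "gprime p" and "odd (gnorm p)"
  shows "2 \<le> cmod p"
proof -
  have "gnorm p \<ge> 5"
    using assms gprime_gnorm[OF p] gnorm_neq_3[OF gprime_gauss_int[OF p]] by presburger
  then have "2\<^sup>2 \<le> (cmod p)\<^sup>2"
    by (simp flip: of_nat_gnorm[OF gprime_gauss_int[OF p]])
  then show ?thesis
    by (rule power2_le_imp_le) simp
qed

lemma odd_gnorm_prime_power_factor:
  assumes "gauss_int z" "odd (gnorm z)" "gnorm z \<noteq> 1"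
  obtains p e w where "gprime p" "e \<noteq> 0" "gauss_int w" "\<not> gdvd p w" "z = p ^ e * w"
    "odd (gnorm w)" "gnorm w < gnorm z" "2 \<le> cmod p"
proof -
  have "z \<noteq> 0" using assms(2) by (auto simp: gnorm_def)
  then have "gnorm z > 1" using assms gnorm_eq_0_iff by (simp add: nat_neq_iff)
  then obtain p c where p: "gprime p" and c: "gauss_int c" "z = p * c"
    using gauss_int_prime_divisor assms(1) by blast
  obtain e w where w: "gauss_int w" "\<not> gdvd p w" and z: "z = p ^ e * w"
    using gprime_power_decomposition[OF p assms(1) \<open>z \<noteq> 0\<close>] by blast
  have "e \<noteq> 0" using w(2) z c by auto
  have gnorm_z: "gnorm z = gnorm p ^ e * gnorm w"
    using z gprime_gauss_int[OF p] w(1) by (simp add: gnorm_mult gnorm_power gauss_int_power)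
  then have "odd (gnorm p)" "odd (gnorm w)" using assms(2) \<open>e \<noteq> 0\<close> by simp_all
  moreover have "gnorm w < gnorm z"
  proof -
    have "gnorm p ^ 1 \<le> gnorm p ^ e"
      using gprime_gnorm[OF p] \<open>e \<noteq> 0\<close> by (intro power_increasing) simp_all
    moreover have "gnorm w \<noteq> 0" using \<open>odd (gnorm w)\<close> by presburger
    ultimately show ?thesis using gnorm_z gprime_gnorm[OF p] by simp
  qed
  ultimately show ?thesis
    using that p \<open>e \<noteq> 0\<close> w z gprime_odd_gnorm_cmod_ge_2 by blast
qed

lemma binomial_le_half_power_bound:
  assumes "real k \<le> C" "1 \<le> C" "2 \<le> x"
  shows "real ((e + k - 1) choose e) \<le> half_power_bound C (x ^ e)"
proof -
  have "real ((e + k - 1) choose e) \<le> real k ^ e"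
    using card_weak_compositions_le_power[of k e]
    by (simp add: card_weak_compositions flip: of_nat_power of_nat_le_iff)
  also have "\<dots> \<le> C ^ e" using assms(1) by (intro power_mono) simp_all
  also have "\<dots> \<le> half_power_bound C (x ^ e)"
  proof (rule power_le_half_power_bound[OF assms(2)])
    have "2 * real e \<le> 2 ^ e" by (rule two_mult_le_two_power)
    also have "\<dots> \<le> x ^ e" using power_mono[OF assms(3), of e] by simp
    finally show "2 * real e \<le> x ^ e" .
  qed
  finally show ?thesis .
qed

lemma num_factorizations_odd_le:
  assumes k: "1 \<le> k" "real k \<le> C" and "gauss_int z" "odd (gnorm z)"
  shows "real (num_factorizations k z) \<le> half_power_bound C (cmod z)"
  using assms(3,4)
proof (induction "gnorm z" arbitrary: z rule: less_induct)
  case less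
  have C: "1 \<le> C" using k by linarith
  show ?case
  proof (cases "gnorm z = 1")
    case True
    then have "cmod z = 1"
      using of_nat_gnorm[OF less.prems(1)] norm_ge_zero[of z] by (auto simp: power2_eq_1_iff)
    then show ?thesis
      using True num_factorizations_gunit[OF _ k(1)] gnorm_eq_1_iff less.prems(1)
      by (simp add: half_power_bound_def)
  next
    case False
    then obtain p e w where p: "gprime p" and w: "gauss_int w" "\<not> gdvd p w" and z: "z = p ^ e * w"
      and "odd (gnorm w)" "gnorm w < gnorm z" "2 \<le> cmod p"
      using odd_gnorm_prime_power_factor less.prems by metis
    have "real (num_factorizations k z) =
            real ((e + k - 1) choose e) * real (num_factorizations k w)"
      unfolding z num_factorizations_gprime_power_mult[OF p w] by simp
    also have "\<dots> \<le> half_power_bound C (cmod p ^ e) * half_power_bound C (cmod w)"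
      using binomial_le_half_power_bound[OF k(2) C \<open>2 \<le> cmod p\<close>] less.hyps w(1)
        \<open>odd (gnorm w)\<close> \<open>gnorm w < gnorm z\<close> half_power_bound_ge_1[OF C]
      by (intro mult_mono) (auto intro: order_trans[OF zero_le_one])
    also have "\<dots> \<le> half_power_bound C (cmod z)"
      using half_power_bound_mult[OF C, of "cmod p ^ e" "cmod w"] \<open>2 \<le> cmod p\<close>
        cmod_ge_1[OF w(1)] w(2) gdvd_0
      by (fastforce simp: z norm_mult norm_power one_le_power)
    finally show ?thesis .
  qed
qed

lemma gprime_of_gnorm_eq_2:
  assumes "gauss_int p" "gnorm p = 2"
  shows "gprime p"
  unfolding gprime_def
proof (intro conjI allI impI)
  fix a b assume "gauss_int a" "gauss_int b" "p = a * b"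
  then have "gnorm a * gnorm b = 2" using assms(2) gnorm_mult by simp
  then have "gnorm a = 1 \<or> gnorm b = 1"
    by (cases "gnorm a"; cases "gnorm b") auto
  then show "gunit a \<or> gunit b"
    using gnorm_eq_1_iff \<open>gauss_int a\<close> \<open>gauss_int b\<close> by blast
qed (use assms in simp_all)

lemma gt_two_power_mult_odd:
  assumes "odd m"
  shows "gt k (2 ^ a * m) = ((2 * a + k - 1) choose (2 * a)) * num_factorizations k (of_nat m)"
proof -
  define w where "w = (- \<i>) ^ a * of_nat m"
  have u: "gunit ((- \<i>) ^ a)" by (rule gunit_power[OF gunit_minus_ii])
  have w: "gauss_int w" using u by (simp add: w_def gauss_int_mult gunit_gauss_int)
  have "gauss_int (1 + \<i>)" "gnorm (1 + \<i>) = 2"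
    by (simp_all add: gauss_int_def gnorm_def cmod_power2)
  then have p: "gprime (1 + \<i>)" by (rule gprime_of_gnorm_eq_2)
  have "\<not> gdvd (1 + \<i>) w"
  proof
    assume "gdvd (1 + \<i>) w"
    then obtain c where "gauss_int c" "w = (1 + \<i>) * c" by (auto simp: gdvd_def)
    then have "gnorm w = 2 * gnorm c"
      using \<open>gauss_int (1 + \<i>)\<close> \<open>gnorm (1 + \<i>) = 2\<close> by (simp add: gnorm_mult)
    moreover have "gnorm w = m\<^sup>2"
      using u by (simp add: w_def gnorm_mult gunit_gauss_int gnorm_gunit)
    ultimately show False using assms by (metis dvd_triv_left even_power)
  qed
  have "(of_nat (2 ^ a * m) :: complex) = ((1 + \<i>)\<^sup>2 * (- \<i>)) ^ a * of_nat m"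
    by (simp add: power2_eq_square algebra_simps)
  also have "\<dots> = (1 + \<i>) ^ (2 * a) * w"
    unfolding w_def power_mult_distrib power_mult by (simp only: mult.assoc)
  finally have "gt k (2 ^ a * m) = num_factorizations k ((1 + \<i>) ^ (2 * a) * w)"
    by (simp add: gt_eq_num_factorizations)
  also have "\<dots> = ((2 * a + k - 1) choose (2 * a)) * num_factorizations k w"
    by (rule num_factorizations_gprime_power_mult[OF p w \<open>\<not> gdvd (1 + \<i>) w\<close>])
  also have "num_factorizations k w = num_factorizations k (of_nat m)"
    using num_factorizations_gassoc[OF gassoc_unit_mult[OF u]] by (simp add: w_def)
  finally show ?thesis .
qed

lemma exists_two_power_mult_odd:
  assumes "(n::nat) \<ge> 1"
  obtains a m where "n = 2 ^ a * m" "odd m"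
  using assms
proof (induction n arbitrary: thesis rule: less_induct)
  case (less n)
  show ?case
  proof (cases "odd n")
    case True
    then show ?thesis using less.prems(1)[of 0 n] by simp
  next
    case False
    then obtain n' where n': "n = 2 * n'" by blast
    then have "n' < n" "1 \<le> n'" using less.prems(2) by simp_all
    then obtain a m where "n' = 2 ^ a * m" "odd m" using less.IH by blast
    then show ?thesis using less.prems(1)[of "Suc a" m] n' by simp
  qed
qed

lemma gt_le_powr:
  assumes "k \<ge> 2" "n \<ge> 1"
  shows "real (gt k n) \<le> real ((k + 1) choose 2) powr (real n / 2)"
proof -
  define C where "C = real ((k + 1) choose 2)"
  have "k \<le> (k + 1) choose 2" by (simp add: numeral_2_eq_2)
  then have kC: "real k \<le> C" "1 \<le> C" using assms(1) by (simp_all add: C_def)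
  obtain a m where n: "n = 2 ^ a * m" and "odd m"
    using exists_two_power_mult_odd[OF assms(2)] by blast
  have "real (card (weak_compositions k (2 * a))) \<le> C ^ a"
    using card_weak_compositions_even_le[of k a] unfolding C_def
    by (metis of_nat_le_iff of_nat_power)
  also have "\<dots> \<le> half_power_bound C (2 ^ a)"
    using kC(2) two_mult_le_two_power[of a] by (rule power_le_half_power_bound)
  finally have two_part: "real ((2 * a + k - 1) choose (2 * a)) \<le> half_power_bound C (2 ^ a)"
    by (simp add: card_weak_compositions)
  have odd_part: "real (num_factorizations k (of_nat m)) \<le> half_power_bound C (real m)"
    using num_factorizations_odd_le[of k C "of_nat m"] kC assms(1) \<open>odd m\<close> by simp
  have "m \<ge> 1" using \<open>odd m\<close> by (cases m) simp_all
  have "real (gt k n) \<le> half_power_bound C (2 ^ a) * half_power_bound C (real m)"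
    unfolding n gt_two_power_mult_odd[OF \<open>odd m\<close>] using two_part odd_part
      half_power_bound_ge_1[OF kC(2)]
    by (simp add: mult_mono)
  also have "\<dots> \<le> half_power_bound C (real n)"
    using half_power_bound_mult[OF kC(2), of "2 ^ a" "real m"] \<open>m \<ge> 1\<close> by (simp add: n)
  also have "\<dots> \<le> C powr (real n / 2)"
    using kC(2) by (rule half_power_bound_le_powr) simp
  finally show ?thesis unfolding C_def .
qed

lemma gt_two: "k \<ge> 1 \<Longrightarrow> gt k 2 = (k + 1) choose 2"
  using gt_two_power_mult_odd[of 1 k 1] num_factorizations_gunit[of 1 k] by (simp add: gunit_def)

theorem lemma4:
  fixes k :: nat
  assumes "k \<ge> 2"
  shows "(\<forall>n::nat. n \<ge> 1 \<longrightarrow> ln (real (gt k n)) / real n \<le> ln (real ((k + 1) choose 2)) / 2)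
       \<and> (\<exists>n::nat. n \<ge> 1 \<and> ln (real (gt k n)) / real n = ln (real ((k + 1) choose 2)) / 2)"
proof
  define C where "C = real ((k + 1) choose 2)"
  have "1 \<le> C" using assms by (simp add: C_def numeral_2_eq_2)
  show "\<forall>n::nat. n \<ge> 1 \<longrightarrow> ln (real (gt k n)) / real n \<le> ln C / 2"
  proof (intro allI impI)
    fix n :: nat assume "n \<ge> 1"
    have "ln (real (gt k n)) \<le> real n / 2 * ln C"
    proof (cases "gt k n = 0")
      case False
      then have "ln (real (gt k n)) \<le> ln (C powr (real n / 2))"
        using gt_le_powr[OF assms \<open>n \<ge> 1\<close>] unfolding C_def by (intro ln_mono) simp_all
      then show ?thesis by simp
    qed (use \<open>1 \<le> C\<close> in simp)
    then show "ln (real (gt k n)) / real n \<le> ln C / 2"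
      using \<open>n \<ge> 1\<close> by (simp add: divide_le_eq mult.commute)
  qed
  show "\<exists>n::nat. n \<ge> 1 \<and> ln (real (gt k n)) / real n = ln C / 2"
    using gt_two assms by (intro exI[of _ 2]) (simp add: C_def)
qed

end
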